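(* The $\mathbf k$-linear map $\varphi:\mathrm{WCQSym}\to\mathrm{QSym}$, defined by $\varphi(M_\alpha)=(-1)^{\ell_\varepsilon(\alpha)}M_{\bar\alpha}$ if $\alpha\in\mathcal C_N$ and $\varphi(M_\alpha)=0$ if $\alpha\in\mathcal C_\varepsilon$, is an algebra homomorphism.
   Context: $\tilde{\mathbb N}=\mathbb N\cup\{\varepsilon\}$ with $0+\varepsilon=\varepsilon+\varepsilon=\varepsilon$ and $n+\varepsilon=n$ for integers $n\ge1$. $\mathbf{k}$ is a commutative ring containing $\mathbb Q$; $\mathbf{k}[[X]]_{\tilde{\mathbb N}}$, $X=\{x_1<x_2<\cdots\}$, is the algebra of possibly infinite linear combinations of formal monomials $\prod x_i^{f(x_i)}$ with $f$ finitely supported $\tilde{\mathbb N}$-valued, multiplied by adding exponents in $\tilde{\mathbb N}$. An $\tilde{\mathbb N}$-composition is a finite (possibly empty) sequence of elements of $\{\varepsilon,1,2,\dots\}$; $M_{(\alpha_1,\dots,\alpha_k)}=\sum_{1\le i_1<\cdots<i_k}x_{i_1}^{\alpha_1}\cdots x_{i_k}^{\alpha_k}$, $M_\emptyset=1$. $\mathrm{WCQSym}$ is the $\mathbf k$-span of all $M_\alpha$ (a subalgebra with the $M_\alpha$ as basis), and $\mathrm{QSym}$ the span of those with all entries positive integers. $\ell_\varepsilon(\alpha)$ is the number of entries equal to $\varepsilon$, $\bar\alpha$ is $\alpha$ with its $\varepsilon$ entries deleted. $\mathcal C_\varepsilon$ is the set of $\tilde{\mathbb N}$-compositions whose first entry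 is $\varepsilon$, $\mathcal C_N$ the set of all others (including the empty one). *)

theory Defs
  imports Main
begin

datatype ntilde = Eps | Num nat

fun nt_add :: "ntilde \<Rightarrow> ntilde \<Rightarrow> ntilde" where
  "nt_add (Num m) (Num n) = Num (m + n)"
| "nt_add Eps Eps = Eps"
| "nt_add (Num n) Eps = (if n = 0 then Eps else Num n)"
| "nt_add Eps (Num n) = (if n = 0 then Eps else Num n)"

text \<open>Formal monomials: exponent functions on the variables x_0 < x_1 < ... (indexed by nat),
  finitely supported (support = variables with exponent different from Num 0).\<close>
type_synonym monom = "nat \<Rightarrow> ntilde"

definition fin_monom :: "monom \<Rightarrow> bool" where
  "fin_monom a \<longleftrightarrow> finite {i. a i \<noteq> Num 0}"

text \<open>Elements of k[[X]]_Ntilde: coefficient functions on monomials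
  (coefficients of non-finitely supported exponent functions are irrelevant/zero).\<close>
type_synonym 'k series = "monom \<Rightarrow> 'k"

definition ser_mult :: "'k::comm_ring_1 series \<Rightarrow> 'k series \<Rightarrow> 'k series" where
  "ser_mult f g = (\<lambda>m. \<Sum>(a, b) \<in> {(a, b). fin_monom a \<and> fin_monom b \<and> (\<forall>i. nt_add (a i) (b i) = m i)}.
       f a * g b)"

definition ser_add :: "'k::comm_ring_1 series \<Rightarrow> 'k series \<Rightarrow> 'k series" where
  "ser_add f g = (\<lambda>m. f m + g m)"

definition ser_smult :: "'k::comm_ring_1 \<Rightarrow> 'k series \<Rightarrow> 'k series" where
  "ser_smult c f = (\<lambda>m. c * f m)"

definition ser_one :: "'k::comm_ring_1 series" where
  "ser_one = (\<lambda>m. if m = (\<lambda>i. Num 0) then 1 else 0)"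

definition is_comp :: "ntilde list \<Rightarrow> bool" where
  "is_comp \<alpha> \<longleftrightarrow> Num 0 \<notin> set \<alpha>"

definition is_qcomp :: "ntilde list \<Rightarrow> bool" where
  "is_qcomp \<alpha> \<longleftrightarrow> is_comp \<alpha> \<and> Eps \<notin> set \<alpha>"

definition monom_of :: "nat list \<Rightarrow> ntilde list \<Rightarrow> monom" where
  "monom_of is \<alpha> = (\<lambda>j. case map_of (zip is \<alpha>) j of None \<Rightarrow> Num 0 | Some e \<Rightarrow> e)"

definition Mfun :: "ntilde list \<Rightarrow> 'k::comm_ring_1 series" where
  "Mfun \<alpha> = (\<lambda>m. if \<exists>is. length is = length \<alpha> \<and> sorted_wrt (<) is \<and> m = monom_of is \<alpha>
                  then 1 else 0)"

definition lincomb :: "(ntilde list \<Rightarrow> 'k::comm_ring_1) \<Rightarrow> (ntilde list \<Rightarrow> 'k series) \<Rightarrow> 'k series" where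
  "lincomb c B = (\<lambda>m. \<Sum>\<alpha>\<in>{\<alpha>. c \<alpha> \<noteq> 0}. c \<alpha> * B \<alpha> m)"

definition valid_coeffs :: "(ntilde list \<Rightarrow> bool) \<Rightarrow> (ntilde list \<Rightarrow> 'k::comm_ring_1) \<Rightarrow> bool" where
  "valid_coeffs P c \<longleftrightarrow> finite {\<alpha>. c \<alpha> \<noteq> 0} \<and> (\<forall>\<alpha>. c \<alpha> \<noteq> 0 \<longrightarrow> P \<alpha>)"

definition WCQSym :: "'k::comm_ring_1 series set" where
  "WCQSym = {lincomb c Mfun | c. valid_coeffs is_comp c}"

definition QSym :: "'k::comm_ring_1 series set" where
  "QSym = {lincomb c Mfun | c. valid_coeffs is_qcomp c}"

definition eps_len :: "ntilde list \<Rightarrow> nat" where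
  "eps_len \<alpha> = length (filter (\<lambda>x. x = Eps) \<alpha>)"

definition bar :: "ntilde list \<Rightarrow> ntilde list" where
  "bar \<alpha> = filter (\<lambda>x. x \<noteq> Eps) \<alpha>"

definition in_C_eps :: "ntilde list \<Rightarrow> bool" where
  "in_C_eps \<alpha> \<longleftrightarrow> \<alpha> \<noteq> [] \<and> hd \<alpha> = Eps"

definition phiM :: "ntilde list \<Rightarrow> 'k::comm_ring_1 series" where
  "phiM \<alpha> = (if in_C_eps \<alpha> then (\<lambda>m. 0)
             else ser_smult ((-1) ^ eps_len \<alpha>) (Mfun (bar \<alpha>)))"

definition phi :: "'k::comm_ring_1 series \<Rightarrow> 'k series" where
  "phi f = lincomb (SOME c. valid_coeffs is_comp c \<and> f = lincomb c Mfun) phiM"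

end

theory Submission
  imports Defs
begin

text \<open>Work with coefficient vectors in the basis \<open>M\<^sub>\<alpha>\<close>. Since monomials multiply by adding
  exponents, the coefficient of a word in a product can be read off one variable at a time by
  splitting the first exponent; for basis elements this gives the quasi-shuffle recursion
  \<open>M\<^bsub>x#u\<^esub> M\<^bsub>y#v\<^esub> = x\<cdot>(M\<^sub>u M\<^bsub>y#v\<^esub>) + y\<cdot>(M\<^bsub>x#u\<^esub> M\<^sub>v) + (x+y)\<cdot>(M\<^sub>u M\<^sub>v)\<close>.
  The map \<open>\<psi>\<close> sending \<open>M\<^sub>\<alpha>\<close> to \<open>(-1)^\<ell>\<^sub>\<epsilon>(\<alpha>) M\<^bsub>bar \<alpha>\<^esub>\<close> is multiplicative by induction
  along this recursion, a leading \<open>\<epsilon>\<close> only contributing a sign. The map \<open>\<phi>\<close> agrees with \<open>\<psi>\<close>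
  on products of compositions that do not start with \<open>\<epsilon>\<close>, since no word of such a product starts
  with \<open>\<epsilon>\<close>; if one factor does start with \<open>\<epsilon>\<close>, the product is killed by \<open>\<phi>\<close>, because the
  two terms of the recursion that begin with the other factor's first letter cancel under \<open>\<psi>\<close>.\<close>

lemma nt_add_Num0_left [simp]: "nt_add (Num 0) q = q"
  by (cases q) auto

lemma nt_add_Num0_right [simp]: "nt_add p (Num 0) = p"
  by (cases p) auto

lemma nt_add_eq_Num0_iff: "nt_add p q = Num 0 \<longleftrightarrow> p = Num 0 \<and> q = Num 0"
  by (cases p; cases q) auto

lemma nt_add_Eps_left: "q \<noteq> Num 0 \<Longrightarrow> nt_add Eps q = q"
  by (cases q) auto

lemma nt_add_Eps_right: "p \<noteq> Num 0 \<Longrightarrow> nt_add p Eps = p"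
  by (cases p) auto

lemma nt_add_neq_Eps: "p \<noteq> Num 0 \<Longrightarrow> p \<noteq> Eps \<Longrightarrow> q \<noteq> Eps \<Longrightarrow> nt_add p q \<noteq> Eps"
  by (cases p; cases q) auto

definition nt_splits :: "ntilde \<Rightarrow> (ntilde \<times> ntilde) set" where
  "nt_splits x = {(p, q). nt_add p q = x}"

lemma finite_nt_splits: "finite (nt_splits x)"
proof -
  define F where "F = insert Eps (Num ` {..case x of Num n \<Rightarrow> n | Eps \<Rightarrow> 0})"
  have "nt_splits x \<subseteq> F \<times> F"
  proof
    fix pq assume "pq \<in> nt_splits x"
    then obtain p q where "pq = (p, q)" "nt_add p q = x" by (auto simp: nt_splits_def)
    then show "pq \<in> F \<times> F"
      by (cases p; cases q) (auto simp: F_def split: if_splits)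
  qed
  then show ?thesis by (rule finite_subset) (simp add: F_def)
qed

lemma nt_splits_Num0: "nt_splits (Num 0) = {(Num 0, Num 0)}"
  by (auto simp: nt_splits_def nt_add_eq_Num0_iff)

lemma is_comp_Nil: "is_comp []"
  by (simp add: is_comp_def)

lemma is_comp_Cons: "is_comp (x # w) \<longleftrightarrow> x \<noteq> Num 0 \<and> is_comp w"
  by (auto simp: is_comp_def)

lemma is_comp_bar: "is_comp a \<Longrightarrow> is_comp (bar a)"
  by (auto simp: is_comp_def bar_def)

lemma bar_Nil [simp]: "bar [] = []"
  by (simp add: bar_def)

lemma bar_Cons: "bar (x # w) = (if x = Eps then bar w else x # bar w)"
  by (simp add: bar_def)

lemma eps_len_Cons: "eps_len (x # w) = (if x = Eps then Suc (eps_len w) else eps_len w)"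
  by (simp add: eps_len_def)

lemma in_C_eps_Cons: "in_C_eps (x # w) \<longleftrightarrow> x = Eps"
  by (simp add: in_C_eps_def)

section \<open>Finitely supported coefficient functions\<close>

definition supp :: "('a \<Rightarrow> 'k::zero) \<Rightarrow> 'a set" where
  "supp c = {x. c x \<noteq> 0}"

definition delta :: "'a \<Rightarrow> 'a \<Rightarrow> 'k::zero_neq_one" where
  "delta x = (\<lambda>y. if y = x then 1 else 0)"

definition lin_ext :: "('a \<Rightarrow> 'b \<Rightarrow> 'k::comm_ring_1) \<Rightarrow> ('a \<Rightarrow> 'k) \<Rightarrow> 'b \<Rightarrow> 'k" where
  "lin_ext K c = (\<lambda>y. \<Sum>x\<in>supp c. c x * K x y)"

lemma lincomb_eq_lin_ext: "lincomb c B = lin_ext B c"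
  by (simp add: lincomb_def lin_ext_def supp_def)

lemma valid_coeffs_iff: "valid_coeffs P c \<longleftrightarrow> finite (supp c) \<and> (\<forall>x\<in>supp c. P x)"
  by (auto simp: valid_coeffs_def supp_def)

lemma supp_delta [simp]: "supp (delta x :: _ \<Rightarrow> 'k::zero_neq_one) = {x}"
  by (auto simp: supp_def delta_def)

lemma supp_add_subset:
  fixes f g :: "'a \<Rightarrow> 'k::monoid_add"
  shows "supp (\<lambda>y. f y + g y) \<subseteq> supp f \<union> supp g"
  unfolding supp_def by (rule subsetI) (rule ccontr, simp)

lemma supp_sum_subset:
  fixes F :: "'i \<Rightarrow> 'a \<Rightarrow> 'k::comm_semiring_0"
  shows "supp (\<lambda>y. \<Sum>i\<in>I. w i * F i y) \<subseteq> (\<Union>i\<in>I. supp (F i))"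
proof
  fix y assume "y \<in> supp (\<lambda>y. \<Sum>i\<in>I. w i * F i y)"
  then have "(\<Sum>i\<in>I. w i * F i y) \<noteq> 0" by (simp add: supp_def)
  then obtain i where "i \<in> I" "w i * F i y \<noteq> 0" by (rule sum.not_neutral_contains_not_neutral)
  then have "i \<in> I" "F i y \<noteq> 0" by auto
  then show "y \<in> (\<Union>i\<in>I. supp (F i))" by (auto simp: supp_def)
qed

lemma supp_lin_ext_subset: "supp (lin_ext K c) \<subseteq> (\<Union>x\<in>supp c. supp (K x))"
  unfolding lin_ext_def by (rule supp_sum_subset)

lemma finite_supp_lin_ext:
  "finite (supp c) \<Longrightarrow> (\<And>x. x \<in> supp c \<Longrightarrow> finite (supp (K x))) \<Longrightarrow> finite (supp (lin_ext K c))"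
  by (rule finite_subset[OF supp_lin_ext_subset]) auto

lemma lin_ext_superset:
  "finite S \<Longrightarrow> supp c \<subseteq> S \<Longrightarrow> lin_ext K c y = (\<Sum>x\<in>S. c x * K x y)"
  unfolding lin_ext_def by (rule sum.mono_neutral_left) (auto simp: supp_def)

lemma lin_ext_cong: "(\<And>x. x \<in> supp c \<Longrightarrow> K x = L x) \<Longrightarrow> lin_ext K c = lin_ext L c"
  by (simp add: lin_ext_def)

lemma finite_supp_add:
  fixes f g :: "'a \<Rightarrow> 'k::monoid_add"
  shows "finite (supp f) \<Longrightarrow> finite (supp g) \<Longrightarrow> finite (supp (\<lambda>y. f y + g y))"
  using supp_add_subset[of f g] by (auto intro: finite_subset)

lemma lin_ext_delta [simp]: "lin_ext K (delta x) = K x"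
  by (rule ext) (simp add: lin_ext_def, simp add: delta_def)

lemma lin_ext_delta_kernel: "finite (supp c) \<Longrightarrow> lin_ext delta c = c"
proof (rule ext)
  fix y assume "finite (supp c)"
  have "lin_ext delta c y = (\<Sum>x\<in>supp c. if x = y then c x else 0)"
    unfolding lin_ext_def by (rule sum.cong) (auto simp: delta_def)
  also have "\<dots> = c y" using \<open>finite (supp c)\<close> by (simp add: sum.delta' supp_def)
  finally show "lin_ext delta c y = c y" .
qed

lemma lin_ext_add:
  assumes "finite (supp c)" "finite (supp d)"
  shows "lin_ext K (\<lambda>x. c x + d x) y = lin_ext K c y + lin_ext K d y"
proof -
  have "lin_ext K (\<lambda>x. c x + d x) y = (\<Sum>x\<in>supp c \<union> supp d. (c x + d x) * K x y)"
    using assms supp_add_subset[of c d] by (intro lin_ext_superset) auto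
  also have "\<dots> = lin_ext K c y + lin_ext K d y"
    using assms by (simp add: distrib_right sum.distrib lin_ext_superset[of "supp c \<union> supp d"])
  finally show ?thesis .
qed

lemma lin_ext_smult:
  assumes "finite (supp c)"
  shows "lin_ext K (\<lambda>x. k * c x) y = k * lin_ext K c y"
proof -
  have "lin_ext K (\<lambda>x. k * c x) y = (\<Sum>x\<in>supp c. (k * c x) * K x y)"
    using assms by (intro lin_ext_superset) (auto simp: supp_def)
  then show ?thesis by (simp add: lin_ext_def sum_distrib_left mult.assoc)
qed

lemma lin_ext_sum:
  assumes "finite I" "\<And>i. i \<in> I \<Longrightarrow> finite (supp (F i))"
  shows "lin_ext K (\<lambda>x. \<Sum>i\<in>I. w i * F i x) y = (\<Sum>i\<in>I. w i * lin_ext K (F i) y)"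
proof -
  define S where "S = (\<Union>i\<in>I. supp (F i))"
  have fin: "finite S" using assms by (simp add: S_def)
  have "lin_ext K (\<lambda>x. \<Sum>i\<in>I. w i * F i x) y = (\<Sum>x\<in>S. (\<Sum>i\<in>I. w i * F i x) * K x y)"
    using fin supp_sum_subset[of w F I] by (intro lin_ext_superset) (simp_all add: S_def)
  also have "\<dots> = (\<Sum>i\<in>I. w i * (\<Sum>x\<in>S. F i x * K x y))"
    by (simp add: sum_distrib_right sum_distrib_left mult.assoc) (rule sum.swap)
  also have "\<dots> = (\<Sum>i\<in>I. w i * lin_ext K (F i) y)"
  proof (intro sum.cong refl)
    fix i assume "i \<in> I"
    then have "lin_ext K (F i) y = (\<Sum>x\<in>S. F i x * K x y)"
      using fin by (intro lin_ext_superset) (auto simp: S_def)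
    then show "w i * (\<Sum>x\<in>S. F i x * K x y) = w i * lin_ext K (F i) y" by simp
  qed
  finally show ?thesis .
qed

lemma lin_ext_lin_ext:
  assumes "finite (supp c)" "\<And>x. x \<in> supp c \<Longrightarrow> finite (supp (K x))"
  shows "lin_ext L (lin_ext K c) = lin_ext (\<lambda>x. lin_ext L (K x)) c"
proof (rule ext)
  fix y
  have "lin_ext L (lin_ext K c) y = lin_ext L (\<lambda>z. \<Sum>x\<in>supp c. c x * K x z) y"
    by (simp add: lin_ext_def[of K])
  also have "\<dots> = (\<Sum>x\<in>supp c. c x * lin_ext L (K x) y)"
    using assms by (rule lin_ext_sum)
  finally show "lin_ext L (lin_ext K c) y = lin_ext (\<lambda>x. lin_ext L (K x)) c y"
    by (simp add: lin_ext_def[of _ c])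
qed

lemma lin_ext_scaled_kernel: "lin_ext (\<lambda>x y. s * K x y) c = (\<lambda>y. s * lin_ext K c y)"
  by (simp add: lin_ext_def sum_distrib_left algebra_simps)

lemma lin_ext_weighted_delta:
  assumes "finite (supp c)"
  shows "lin_ext K (lin_ext (\<lambda>x z. s x * delta (f x) z) c) = lin_ext (\<lambda>x y. s x * K (f x) y) c"
proof -
  have "lin_ext K (\<lambda>z. s x * delta (f x) z) = (\<lambda>y. s x * K (f x) y)" for x
    using lin_ext_smult[of "delta (f x)" K "s x"] by (simp add: fun_eq_iff)
  moreover have "finite (supp (\<lambda>z. s x * delta (f x) z :: 'b))" for x
    by (rule finite_subset[of _ "{f x}"]) (auto simp: supp_def delta_def)
  ultimately show ?thesis using assms by (simp add: lin_ext_lin_ext)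
qed

section \<open>The product on coefficient functions\<close>

text \<open>Shifting by the exponent \<open>Num 0\<close> leaves a coefficient function unchanged: an absent
  variable contributes no letter to the composition.\<close>
definition shift :: "(ntilde list \<Rightarrow> 'k::zero) \<Rightarrow> ntilde \<Rightarrow> ntilde list \<Rightarrow> 'k" where
  "shift c p = (if p = Num 0 then c else (\<lambda>w. c (p # w)))"

text \<open>\<open>conv A B w\<close> is the coefficient of \<open>w\<close> in the product of the series with coefficients
  \<open>A\<close> and \<open>B\<close>, obtained by splitting the exponent of one variable at a time.\<close>
fun conv :: "(ntilde list \<Rightarrow> 'k::comm_ring_1) \<Rightarrow> (ntilde list \<Rightarrow> 'k) \<Rightarrow> ntilde list \<Rightarrow> 'k" where
  "conv A B [] = A [] * B []"
| "conv A B (x # w) = (\<Sum>pq\<in>nt_splits x. conv (shift A (fst pq)) (shift B (snd pq)) w)"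

lemma conv_sum_left: "conv (\<lambda>w. \<Sum>i\<in>I. c i * A i w) B g = (\<Sum>i\<in>I. c i * conv (A i) B g)"
proof (induction g arbitrary: A B)
  case Nil
  then show ?case by (simp add: sum_distrib_right mult.assoc)
next
  case (Cons x g)
  have "shift (\<lambda>w. \<Sum>i\<in>I. c i * A i w) p = (\<lambda>w. \<Sum>i\<in>I. c i * shift (A i) p w)" for p
    by (auto simp: shift_def)
  then show ?case
    by (simp add: Cons.IH sum_distrib_left) (rule sum.swap)
qed

lemma conv_sum_right: "conv A (\<lambda>w. \<Sum>i\<in>I. c i * B i w) g = (\<Sum>i\<in>I. c i * conv A (B i) g)"
proof (induction g arbitrary: A B)
  case Nil
  then show ?case by (simp add: sum_distrib_left mult.left_commute)
next
  case (Cons x g)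
  have "shift (\<lambda>w. \<Sum>i\<in>I. c i * B i w) p = (\<lambda>w. \<Sum>i\<in>I. c i * shift (B i) p w)" for p
    by (auto simp: shift_def)
  then show ?case
    by (simp add: Cons.IH sum_distrib_left) (rule sum.swap)
qed

lemma conv_zero_left: "conv (\<lambda>w. 0) B g = 0"
  using conv_sum_left[where I="{}" and B=B and g=g] by simp

lemma conv_zero_right: "conv A (\<lambda>w. 0) g = 0"
  using conv_sum_right[where I="{}" and A=A and g=g] by simp

lemma shift_delta_Nil: "shift (delta []) p = (if p = Num 0 then delta [] else (\<lambda>w. 0))"
  by (auto simp: shift_def delta_def)

lemma shift_delta_Cons:
  "shift (delta (a # u)) p =
     (if p = Num 0 then delta (a # u) else if p = a then delta u else (\<lambda>w. 0))"
  by (auto simp: shift_def delta_def)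

lemma conv_delta_Nil_left: "is_comp g \<Longrightarrow> conv (delta []) B g = B g"
proof (induction g arbitrary: B)
  case Nil then show ?case by (simp add: delta_def)
next
  case (Cons x g)
  have x: "x \<noteq> Num 0" and g: "is_comp g" using Cons.prems by (auto simp: is_comp_Cons)
  have "conv (delta []) B (x # g) =
      (\<Sum>pq\<in>{(Num 0, x)}. conv (shift (delta []) (fst pq)) (shift B (snd pq)) g)"
    unfolding conv.simps
    by (rule sum.mono_neutral_right[OF finite_nt_splits])
      (auto simp: nt_splits_def shift_delta_Nil conv_zero_left)
  also have "\<dots> = B (x # g)" using Cons.IH[OF g] x by (simp add: shift_delta_Nil shift_def)
  finally show ?case .
qed

lemma conv_delta_Nil_right: "is_comp g \<Longrightarrow> conv A (delta []) g = A g"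
proof (induction g arbitrary: A)
  case Nil then show ?case by (simp add: delta_def)
next
  case (Cons x g)
  have x: "x \<noteq> Num 0" and g: "is_comp g" using Cons.prems by (auto simp: is_comp_Cons)
  have "conv A (delta []) (x # g) =
      (\<Sum>pq\<in>{(x, Num 0)}. conv (shift A (fst pq)) (shift (delta []) (snd pq)) g)"
    unfolding conv.simps
    by (rule sum.mono_neutral_right[OF finite_nt_splits])
      (auto simp: nt_splits_def shift_delta_Nil conv_zero_right)
  also have "\<dots> = A (x # g)" using Cons.IH[OF g] x by (simp add: shift_delta_Nil shift_def)
  finally show ?case .
qed

text \<open>Only three splittings of the first letter \<open>x\<close> survive: \<open>x\<close> comes from the first
  letter of \<open>a # u\<close>, from that of \<open>b # v\<close>, or from both together.\<close>
lemma conv_delta_Cons: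
  assumes "a \<noteq> Num 0" "b \<noteq> Num 0" "x \<noteq> Num 0"
  shows "conv (delta (a # u)) (delta (b # v)) (x # g) =
     (if x = a then conv (delta u) (delta (b # v)) g else 0)
     + (if x = b then conv (delta (a # u)) (delta v) g else 0)
     + (if x = nt_add a b then conv (delta u) (delta v) g else (0::'k::comm_ring_1))"
proof -
  define G where "G pq = (conv (shift (delta (a # u)) (fst pq)) (shift (delta (b # v)) (snd pq)) g :: 'k)"
    for pq
  define T where "T = {(a, Num 0), (Num 0, b), (a, b)}"
  have "conv (delta (a # u)) (delta (b # v)) (x # g) = sum G (nt_splits x)"
    by (simp add: G_def)
  also have "\<dots> = sum G (nt_splits x \<inter> T)"
    using assms(3)
    by (intro sum.mono_neutral_right finite_nt_splits)
      (auto simp: G_def T_def shift_delta_Cons conv_zero_left conv_zero_right nt_splits_def)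
  also have "\<dots> = (\<Sum>pq\<in>T. if pq \<in> nt_splits x then G pq else 0)"
    by (subst Int_commute) (rule sum.inter_restrict, simp add: T_def)
  also have "\<dots> = (if x = a then conv (delta u) (delta (b # v)) g else 0)
     + (if x = b then conv (delta (a # u)) (delta v) g else 0)
     + (if x = nt_add a b then conv (delta u) (delta v) g else 0)"
    using assms(1,2) by (simp add: T_def nt_splits_def G_def shift_delta_Cons)
  finally show ?thesis .
qed

definition coeff_mult :: "(ntilde list \<Rightarrow> 'k::comm_ring_1) \<Rightarrow> (ntilde list \<Rightarrow> 'k) \<Rightarrow> ntilde list \<Rightarrow> 'k" where
  "coeff_mult A B g = (if is_comp g then conv A B g else 0)"

definition qshuffle :: "ntilde list \<Rightarrow> ntilde list \<Rightarrow> ntilde list \<Rightarrow> 'k::comm_ring_1" where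
  "qshuffle a b = coeff_mult (delta a) (delta b)"

definition prepend :: "ntilde \<Rightarrow> (ntilde list \<Rightarrow> 'k::zero) \<Rightarrow> ntilde list \<Rightarrow> 'k" where
  "prepend x F w = (case w of [] \<Rightarrow> 0 | y # w' \<Rightarrow> if y = x then F w' else 0)"

lemma prepend_simps [simp]:
  "prepend x F [] = 0" "prepend x F (y # w) = (if y = x then F w else 0)"
  by (simp_all add: prepend_def)

lemma supp_prepend: "supp (prepend x F) = Cons x ` supp F"
proof (rule set_eqI)
  fix w show "w \<in> supp (prepend x F) \<longleftrightarrow> w \<in> Cons x ` supp F"
    by (cases w) (auto simp: supp_def)
qed

lemma qshuffle_Nil_left: "is_comp b \<Longrightarrow> qshuffle [] b = delta b"
  by (rule ext) (simp add: qshuffle_def coeff_mult_def conv_delta_Nil_left, simp add: delta_def)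

lemma qshuffle_Nil_right: "is_comp a \<Longrightarrow> qshuffle a [] = delta a"
  by (rule ext) (simp add: qshuffle_def coeff_mult_def conv_delta_Nil_right, simp add: delta_def)

lemma qshuffle_Cons:
  assumes "is_comp (a # u)" "is_comp (b # v)"
  shows "qshuffle (a # u) (b # v) = (\<lambda>g. prepend a (qshuffle u (b # v)) g
           + prepend b (qshuffle (a # u) v) g + prepend (nt_add a b) (qshuffle u v) g)"
proof (rule ext)
  fix g
  have a: "a \<noteq> Num 0" and b: "b \<noteq> Num 0" using assms by (auto simp: is_comp_Cons)
  then have ab: "nt_add a b \<noteq> Num 0" by (simp add: nt_add_eq_Num0_iff)
  show "qshuffle (a # u) (b # v) g = prepend a (qshuffle u (b # v)) g
           + prepend b (qshuffle (a # u) v) g + prepend (nt_add a b) (qshuffle u v) g"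
  proof (cases g)
    case Nil then show ?thesis by (simp add: qshuffle_def coeff_mult_def delta_def is_comp_Nil)
  next
    case (Cons x g')
    show ?thesis
    proof (cases "is_comp g")
      case True
      then have "x \<noteq> Num 0" "is_comp g'" using Cons by (auto simp: is_comp_Cons)
      then show ?thesis using True Cons
        by (simp add: qshuffle_def coeff_mult_def conv_delta_Cons[OF a b] del: conv.simps)
    next
      case False
      then show ?thesis using Cons a b ab by (auto simp: qshuffle_def coeff_mult_def is_comp_Cons)
    qed
  qed
qed

lemma finite_supp_qshuffle:
  "is_comp a \<Longrightarrow> is_comp b \<Longrightarrow> finite (supp (qshuffle a b :: _ \<Rightarrow> 'k::comm_ring_1))"
proof (induction a arbitrary: b)
  case Nil then show ?case by (simp add: qshuffle_Nil_left)
next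
  case (Cons x u)
  note IH_u = Cons.IH and a = Cons.prems(1)
  from Cons.prems(2) show ?case
  proof (induction b)
    case Nil then show ?case using a by (simp add: qshuffle_Nil_right)
  next
    case (Cons y v)
    have u: "is_comp u" and v: "is_comp v" using a Cons.prems by (simp_all add: is_comp_Cons)
    have "supp (qshuffle (x # u) (y # v) :: _ \<Rightarrow> 'k) \<subseteq> supp (prepend x (qshuffle u (y # v)) :: _ \<Rightarrow> 'k)
        \<union> supp (prepend y (qshuffle (x # u) v) :: _ \<Rightarrow> 'k) \<union> supp (prepend (nt_add x y) (qshuffle u v) :: _ \<Rightarrow> 'k)"
      unfolding qshuffle_Cons[OF a Cons.prems] by (auto simp: supp_def)
    moreover have "finite (supp (qshuffle u (y # v) :: _ \<Rightarrow> 'k))" "finite (supp (qshuffle u v :: _ \<Rightarrow> 'k))"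
      using IH_u u v Cons.prems by auto
    ultimately show ?case using Cons.IH[OF v] by (auto simp: supp_prepend intro: finite_subset)
  qed
qed

lemma coeff_mult_eq_lin_ext:
  assumes "finite (supp A)" "finite (supp B)"
  shows "coeff_mult A B = lin_ext (\<lambda>a. lin_ext (qshuffle a) B) A"
proof (rule ext)
  fix g
  have "conv A B g = conv (\<lambda>w. \<Sum>a\<in>supp A. A a * delta a w) (\<lambda>w. \<Sum>b\<in>supp B. B b * delta b w) g"
    using lin_ext_delta_kernel[OF assms(1)] lin_ext_delta_kernel[OF assms(2)]
    by (simp add: lin_ext_def)
  also have "\<dots> = (\<Sum>a\<in>supp A. A a * (\<Sum>b\<in>supp B. B b * conv (delta a) (delta b) g))"
    by (simp add: conv_sum_left conv_sum_right)
  finally show "coeff_mult A B g = lin_ext (\<lambda>a. lin_ext (qshuffle a) B) A g"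
    by (cases "is_comp g") (simp_all add: coeff_mult_def qshuffle_def lin_ext_def)
qed

lemma valid_coeff_mult:
  assumes "valid_coeffs is_comp A" "valid_coeffs is_comp B"
  shows "valid_coeffs is_comp (coeff_mult A B)"
proof -
  have fin: "finite (supp A)" "finite (supp B)" using assms by (simp_all add: valid_coeffs_iff)
  have "finite (supp (lin_ext (\<lambda>a. lin_ext (qshuffle a) B) A))"
    using assms by (auto simp: valid_coeffs_iff intro!: finite_supp_lin_ext finite_supp_qshuffle)
  then have "finite (supp (coeff_mult A B))" by (simp add: coeff_mult_eq_lin_ext[OF fin])
  then show ?thesis by (auto simp: valid_coeffs_iff supp_def coeff_mult_def)
qed

lemma lin_ext_qshuffle_Cons:
  fixes K :: "ntilde list \<Rightarrow> 'b \<Rightarrow> 'k::comm_ring_1"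
  assumes "is_comp (x # u)" "is_comp (y # v)"
  shows "lin_ext K (qshuffle (x # u) (y # v)) d = lin_ext K (prepend x (qshuffle u (y # v))) d
    + lin_ext K (prepend y (qshuffle (x # u) v)) d + lin_ext K (prepend (nt_add x y) (qshuffle u v)) d"
proof -
  have "is_comp u" "is_comp v" using assms by (simp_all add: is_comp_Cons)
  then have "finite (supp (prepend z (qshuffle a b) :: _ \<Rightarrow> 'k))"
    if "a \<in> {u, x # u}" "b \<in> {v, y # v}" for z a b
    using that assms by (auto simp: supp_prepend intro: finite_supp_qshuffle)
  then show ?thesis
    unfolding qshuffle_Cons[OF assms] by (simp add: lin_ext_add finite_supp_add)
qed

section \<open>The map \<open>\<phi>\<close> on coefficients\<close>

definition eps_sign :: "ntilde list \<Rightarrow> 'k::comm_ring_1" where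
  "eps_sign a = (-1) ^ eps_len a"

definition phi_sign :: "ntilde list \<Rightarrow> 'k::comm_ring_1" where
  "phi_sign a = (if in_C_eps a then 0 else eps_sign a)"

text \<open>\<open>phi_coeffs\<close> is \<open>\<phi>\<close> written in the bases \<open>M\<^sub>\<alpha>\<close>; \<open>psi_coeffs\<close> differs from it only
  in not annihilating \<open>\<C>\<^sub>\<epsilon>\<close>, and is the map for which multiplicativity goes through by
  induction.\<close>
definition psi_coeffs :: "(ntilde list \<Rightarrow> 'k::comm_ring_1) \<Rightarrow> ntilde list \<Rightarrow> 'k" where
  "psi_coeffs = lin_ext (\<lambda>a d. eps_sign a * delta (bar a) d)"

definition phi_coeffs :: "(ntilde list \<Rightarrow> 'k::comm_ring_1) \<Rightarrow> ntilde list \<Rightarrow> 'k" where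
  "phi_coeffs = lin_ext (\<lambda>a d. phi_sign a * delta (bar a) d)"

lemma eps_sign_Nil [simp]: "eps_sign [] = 1"
  by (simp add: eps_sign_def eps_len_def)

lemma eps_sign_Cons: "eps_sign (x # w) = (if x = Eps then - eps_sign w else eps_sign w)"
  by (simp add: eps_sign_def eps_len_Cons)

lemma phi_sign_Nil [simp]: "phi_sign [] = 1"
  by (simp add: phi_sign_def in_C_eps_def)

lemma phi_sign_Cons: "phi_sign (x # w) = (if x = Eps then 0 else eps_sign w)"
  by (simp add: phi_sign_def in_C_eps_Cons eps_sign_Cons)

lemma lin_ext_prepend: "lin_ext K (prepend x F) = lin_ext (\<lambda>w. K (x # w)) F"
  unfolding lin_ext_def supp_prepend by (subst sum.reindex) (auto simp: inj_on_def)

lemma psi_coeffs_prepend: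
  "psi_coeffs (prepend x F) = (if x = Eps then (\<lambda>d. - psi_coeffs F d) else prepend x (psi_coeffs F))"
proof (rule ext)
  fix d
  show "psi_coeffs (prepend x F) d =
      (if x = Eps then (\<lambda>d. - psi_coeffs F d) else prepend x (psi_coeffs F)) d"
    unfolding psi_coeffs_def lin_ext_prepend
    by (cases d) (auto simp: lin_ext_def eps_sign_Cons bar_Cons delta_def sum_negf)
qed

lemma phi_coeffs_prepend:
  "phi_coeffs (prepend x F) = (if x = Eps then (\<lambda>d. 0) else prepend x (psi_coeffs F))"
proof (rule ext)
  fix d
  show "phi_coeffs (prepend x F) d = (if x = Eps then (\<lambda>d. 0) else prepend x (psi_coeffs F)) d"
    unfolding phi_coeffs_def psi_coeffs_def lin_ext_prepend
    by (cases d) (auto simp: lin_ext_def phi_sign_Cons bar_Cons delta_def)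
qed

lemma psi_coeffs_delta: "psi_coeffs (delta a) = (\<lambda>d. eps_sign a * delta (bar a) d)"
  by (simp add: psi_coeffs_def)

lemma phi_coeffs_delta: "phi_coeffs (delta a) = (\<lambda>d. phi_sign a * delta (bar a) d)"
  by (simp add: phi_coeffs_def)

lemma psi_qshuffle:
  assumes "is_comp a" "is_comp b"
  shows "psi_coeffs (qshuffle a b) = (\<lambda>d. eps_sign a * eps_sign b * qshuffle (bar a) (bar b) d)"
  using assms
proof (induction a arbitrary: b)
  case Nil
  then show ?case by (simp add: qshuffle_Nil_left is_comp_bar psi_coeffs_delta)
next
  case (Cons x u)
  note IH_u = Cons.IH and a = Cons.prems(1)
  from Cons.prems(2) show ?case
  proof (induction b)
    case Nil
    then show ?case using a by (simp add: qshuffle_Nil_right is_comp_bar psi_coeffs_delta)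
  next
    case (Cons y v)
    note b = Cons.prems and IH_v = Cons.IH
    have u: "is_comp u" and v: "is_comp v" and x: "x \<noteq> Num 0" and y: "y \<noteq> Num 0"
      using a b by (simp_all add: is_comp_Cons)
    note X = IH_u[OF u b] and Y = IH_v[OF v] and Z = IH_u[OF u v]
    have Q: "psi_coeffs (qshuffle (x # u) (y # v)) = (\<lambda>d.
        psi_coeffs (prepend x (qshuffle u (y # v))) d + psi_coeffs (prepend y (qshuffle (x # u) v)) d
        + psi_coeffs (prepend (nt_add x y) (qshuffle u v)) d)"
      unfolding psi_coeffs_def using a b by (intro ext lin_ext_qshuffle_Cons)
    consider "x = Eps" "y = Eps" | "x = Eps" "y \<noteq> Eps" | "x \<noteq> Eps" "y = Eps" | "x \<noteq> Eps" "y \<noteq> Eps"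
      by blast
    then show ?case
    proof cases
      case 1
      then show ?thesis unfolding Q psi_coeffs_prepend X Y Z
        by (intro ext) (simp add: bar_Cons eps_sign_Cons)
    next
      case 2
      moreover have "nt_add x y = y" using 2 y by (simp add: nt_add_Eps_left)
      ultimately show ?thesis unfolding Q psi_coeffs_prepend X Y Z
        by (intro ext, case_tac d)
          (simp_all add: bar_Cons eps_sign_Cons algebra_simps)
    next
      case 3
      moreover have "nt_add x y = x" using 3 x by (simp add: nt_add_Eps_right)
      ultimately show ?thesis unfolding Q psi_coeffs_prepend X Y Z
        by (intro ext, case_tac d)
          (simp_all add: bar_Cons eps_sign_Cons algebra_simps)
    next
      case 4
      moreover have "nt_add x y \<noteq> Eps" using 4 x by (simp add: nt_add_neq_Eps)
      moreover have R: "qshuffle (x # bar u) (y # bar v) = (\<lambda>g. prepend x (qshuffle (bar u) (y # bar v)) g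
           + prepend y (qshuffle (x # bar u) (bar v)) g + prepend (nt_add x y) (qshuffle (bar u) (bar v)) g)"
        using x y u v by (simp add: qshuffle_Cons is_comp_Cons is_comp_bar)
      ultimately show ?thesis unfolding Q psi_coeffs_prepend X Y Z
        by (intro ext, case_tac d)
          (simp_all add: bar_Cons eps_sign_Cons R algebra_simps)
    qed
  qed
qed

lemma phi_coeffs_eq_psi_coeffs:
  assumes "\<And>w. in_C_eps w \<Longrightarrow> F w = 0"
  shows "phi_coeffs F = psi_coeffs F"
  unfolding phi_coeffs_def psi_coeffs_def
  using assms by (intro lin_ext_cong) (auto simp: phi_sign_def supp_def)

lemma qshuffle_in_C_eps:
  assumes "is_comp (x # u)" "is_comp (y # v)" "x \<noteq> Eps" "y \<noteq> Eps" "in_C_eps w"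
  shows "qshuffle (x # u) (y # v) w = 0"
proof -
  obtain w' where "w = Eps # w'" using assms(5) by (cases w) (auto simp: in_C_eps_def)
  moreover have "nt_add x y \<noteq> Eps" using assms by (simp add: nt_add_neq_Eps is_comp_Cons)
  ultimately show ?thesis using assms by (simp add: qshuffle_Cons)
qed

lemma phi_qshuffle:
  assumes a: "is_comp a" and b: "is_comp b"
  shows "phi_coeffs (qshuffle a b) = (\<lambda>d. phi_sign a * phi_sign b * qshuffle (bar a) (bar b) d)"
proof (cases a)
  case Nil
  then show ?thesis using b by (simp add: qshuffle_Nil_left is_comp_bar phi_coeffs_delta)
next
  case (Cons x u)
  show ?thesis
  proof (cases b)
    case Nil
    then show ?thesis using a by (simp add: qshuffle_Nil_right is_comp_bar phi_coeffs_delta)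
  next
    case (Cons y v)
    note a = a[unfolded \<open>a = x # u\<close>] and b = b[unfolded Cons]
    have u: "is_comp u" and v: "is_comp v" and x: "x \<noteq> Num 0" and y: "y \<noteq> Num 0"
      using a b by (simp_all add: is_comp_Cons)
    have Q: "phi_coeffs (qshuffle (x # u) (y # v)) = (\<lambda>d.
        phi_coeffs (prepend x (qshuffle u (y # v))) d + phi_coeffs (prepend y (qshuffle (x # u) v)) d
        + phi_coeffs (prepend (nt_add x y) (qshuffle u v)) d)"
      unfolding phi_coeffs_def using a b by (intro ext lin_ext_qshuffle_Cons)
    note X = psi_qshuffle[OF u b] and Y = psi_qshuffle[OF a v] and Z = psi_qshuffle[OF u v]
    consider "x \<noteq> Eps" "y \<noteq> Eps" | "x = Eps" | "y = Eps" by blast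
    then have "phi_coeffs (qshuffle (x # u) (y # v)) =
        (\<lambda>d. phi_sign (x # u) * phi_sign (y # v) * qshuffle (bar (x # u)) (bar (y # v)) d)"
    proof cases
      case 1
      then have "phi_coeffs (qshuffle (x # u) (y # v)) = psi_coeffs (qshuffle (x # u) (y # v))"
        using a b by (intro phi_coeffs_eq_psi_coeffs qshuffle_in_C_eps)
      then show ?thesis using 1 by (simp add: psi_qshuffle[OF a b] phi_sign_Cons eps_sign_Cons)
    next
      case 2
      moreover have "nt_add x y = y" using 2 y by (simp add: nt_add_Eps_left)
      ultimately show ?thesis unfolding Q phi_coeffs_prepend Y Z
        by (intro ext, case_tac d) (simp_all add: phi_sign_Cons bar_Cons eps_sign_Cons)
    next
      case 3
      moreover have "nt_add x y = x" using 3 x by (simp add: nt_add_Eps_right)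
      ultimately show ?thesis unfolding Q phi_coeffs_prepend X Z
        by (intro ext, case_tac d) (simp_all add: phi_sign_Cons bar_Cons eps_sign_Cons)
    qed
    then show ?thesis using \<open>a = x # u\<close> Cons by simp
  qed
qed

lemma phi_coeff_mult:
  fixes A B :: "ntilde list \<Rightarrow> 'k::comm_ring_1"
  assumes "valid_coeffs is_comp A" "valid_coeffs is_comp B"
  shows "phi_coeffs (coeff_mult A B) = coeff_mult (phi_coeffs A) (phi_coeffs B)"
proof -
  have A: "finite (supp A)" "\<And>a. a \<in> supp A \<Longrightarrow> is_comp a"
    and B: "finite (supp B)" "\<And>b. b \<in> supp B \<Longrightarrow> is_comp b"
    using assms by (auto simp: valid_coeffs_iff)
  have fin_phi: "finite (supp (phi_coeffs C))" if "finite (supp C)" for C :: "_ \<Rightarrow> 'k"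
    unfolding phi_coeffs_def using that
    by (intro finite_supp_lin_ext) (auto intro: finite_subset[of _ "{bar _}"] simp: supp_def delta_def)
  let ?Q = "\<lambda>a b d. phi_sign a * phi_sign b * qshuffle (bar a) (bar b) d :: 'k"
  have "phi_coeffs (coeff_mult A B) = lin_ext (\<lambda>a. phi_coeffs (lin_ext (qshuffle a) B)) A"
    unfolding coeff_mult_eq_lin_ext[OF A(1) B(1)] phi_coeffs_def
    using A B by (intro lin_ext_lin_ext finite_supp_lin_ext finite_supp_qshuffle) auto
  also have "\<dots> = lin_ext (\<lambda>a. lin_ext (?Q a) B) A"
    unfolding phi_coeffs_def using A B
    by (intro lin_ext_cong)
      (simp add: lin_ext_lin_ext finite_supp_qshuffle phi_qshuffle[unfolded phi_coeffs_def] cong: lin_ext_cong)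
  also have "\<dots> = lin_ext (\<lambda>a. lin_ext (qshuffle a) (phi_coeffs B)) (phi_coeffs A)"
    unfolding phi_coeffs_def
    by (simp add: lin_ext_weighted_delta A(1) B(1) lin_ext_scaled_kernel mult.assoc)
  also have "\<dots> = coeff_mult (phi_coeffs A) (phi_coeffs B)"
    by (simp add: coeff_mult_eq_lin_ext fin_phi A(1) B(1))
  finally show ?thesis .
qed

lemma valid_phi_coeffs:
  assumes "valid_coeffs is_comp c"
  shows "valid_coeffs is_qcomp (phi_coeffs c)"
proof -
  have "supp (phi_coeffs c) \<subseteq> bar ` supp c"
    unfolding phi_coeffs_def
    by (rule subset_trans[OF supp_lin_ext_subset]) (auto simp: supp_def delta_def split: if_splits)
  moreover have "is_qcomp (bar a)" if "is_comp a" for a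
    using that by (auto simp: is_qcomp_def is_comp_def bar_def)
  ultimately show ?thesis using assms by (auto simp: valid_coeffs_iff intro: finite_subset)
qed

lemma shift_coeff_mult:
  assumes "x \<noteq> Num 0"
  shows "shift (coeff_mult A B) x =
    (\<lambda>w. \<Sum>pq\<in>nt_splits x. 1 * coeff_mult (shift A (fst pq)) (shift B (snd pq)) w)"
  using assms by (intro ext) (simp add: shift_def coeff_mult_def is_comp_Cons)

lemma valid_shift: "valid_coeffs is_comp c \<Longrightarrow> valid_coeffs is_comp (shift c p)"
proof (cases "p = Num 0")
  case False
  assume c: "valid_coeffs is_comp c"
  have "supp (shift c p) = Cons p -` supp c" using False by (auto simp: shift_def supp_def)
  then have "finite (supp (shift c p))" using c by (auto simp: valid_coeffs_iff intro: finite_vimageI)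
  then show ?thesis using c False by (auto simp: valid_coeffs_iff shift_def supp_def is_comp_Cons)
qed (simp add: shift_def)

section \<open>Monomials and the product of series\<close>

definition mcons :: "ntilde \<Rightarrow> monom \<Rightarrow> monom" where
  "mcons x m = (\<lambda>i. case i of 0 \<Rightarrow> x | Suc j \<Rightarrow> m j)"

definition monom_one :: monom where
  "monom_one = (\<lambda>_. Num 0)"

lemma mcons_0 [simp]: "mcons x m 0 = x" and mcons_Suc [simp]: "mcons x m (Suc j) = m j"
  by (simp_all add: mcons_def)

lemma mcons_decomp: "m = mcons (m 0) (\<lambda>j. m (Suc j))"
  by (rule ext) (simp add: mcons_def split: nat.split)

lemma mcons_eq_iff: "mcons x m = mcons y m' \<longleftrightarrow> x = y \<and> m = m'"
proof
  assume h: "mcons x m = mcons y m'"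
  have "x = y" using fun_cong[OF h, of 0] by simp
  moreover have "m = m'" using fun_cong[OF h, of "Suc _"] by (intro ext) simp
  ultimately show "x = y \<and> m = m'" ..
qed simp

lemma fin_monom_mcons: "fin_monom (mcons x m) \<longleftrightarrow> fin_monom m"
proof -
  have "{i. mcons x m i \<noteq> Num 0} \<subseteq> insert 0 (Suc ` {i. m i \<noteq> Num 0})"
  proof
    fix i assume "i \<in> {i. mcons x m i \<noteq> Num 0}"
    then show "i \<in> insert 0 (Suc ` {i. m i \<noteq> Num 0})" by (cases i) auto
  qed
  moreover have "{i. m i \<noteq> Num 0} = Suc -` {i. mcons x m i \<noteq> Num 0}" by auto
  ultimately show ?thesis unfolding fin_monom_def
    by (metis finite_imageI finite_insert finite_subset finite_vimageI inj_Suc)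
qed

lemma map_of_zip_map_Suc:
  "map_of (zip (map Suc ix) a) (Suc j) = map_of (zip ix a) j"
  "map_of (zip (map Suc ix) a) 0 = None"
  by (induction ix arbitrary: a) (auto split: list.splits simp: zip_Cons1)

lemma monom_of_map_Suc: "monom_of (map Suc ix) a = mcons (Num 0) (monom_of ix a)"
  by (rule ext) (simp add: monom_of_def mcons_def map_of_zip_map_Suc split: nat.split)

lemma monom_of_0_map_Suc: "monom_of (0 # map Suc ix) (x # a) = mcons x (monom_of ix a)"
  by (rule ext) (simp add: monom_of_def mcons_def map_of_zip_map_Suc split: nat.split)

lemma sorted_wrt_less_nat_cases:
  assumes "sorted_wrt (<) (ix :: nat list)"
  obtains l where "ix = map Suc l" "sorted_wrt (<) l"
    | l where "ix = 0 # map Suc l" "sorted_wrt (<) l"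
proof -
  have unshift: "\<exists>l. js = map Suc l \<and> sorted_wrt (<) l"
    if "sorted_wrt (<) js" "\<forall>k\<in>set js. 0 < k" for js :: "nat list"
  proof -
    have "js = map Suc (map (\<lambda>k. k - 1) js)" using that(2) by (induction js) auto
    moreover have "sorted_wrt (<) (map (\<lambda>k. k - 1) js)"
      using that by (auto simp: sorted_wrt_map elim!: sorted_wrt_mono_rel[rotated])
    ultimately show ?thesis by blast
  qed
  show ?thesis
  proof (cases ix)
    case Nil then show ?thesis using that(1)[of "[]"] by simp
  next
    case (Cons i r)
    then have r: "sorted_wrt (<) r" "\<forall>k\<in>set r. i < k" using assms by auto
    show ?thesis
    proof (cases "i = 0")
      case True
      then obtain l where "r = map Suc l" "sorted_wrt (<) l" using unshift[of r] r by auto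
      then show ?thesis using that(2) Cons True by blast
    next
      case False
      then have "\<forall>k\<in>set ix. 0 < k" using Cons r by auto
      then show ?thesis using unshift[OF assms] that(1) by blast
    qed
  qed
qed

definition is_M_monom :: "ntilde list \<Rightarrow> monom \<Rightarrow> bool" where
  "is_M_monom a m \<longleftrightarrow> (\<exists>ix. length ix = length a \<and> sorted_wrt (<) ix \<and> m = monom_of ix a)"

lemma Mfun_eq: "Mfun a m = (if is_M_monom a m then 1 else 0)"
  by (simp add: Mfun_def is_M_monom_def)

lemma is_M_monom_mcons:
  assumes "is_comp a"
  shows "is_M_monom a (mcons x m) \<longleftrightarrow>
    (if x = Num 0 then is_M_monom a m else (\<exists>a'. a = x # a' \<and> is_M_monom a' m))"
proof
  assume "is_M_monom a (mcons x m)"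
  then obtain ix where l: "length ix = length a" and s: "sorted_wrt (<) ix"
    and m: "mcons x m = monom_of ix a"
    by (auto simp: is_M_monom_def)
  from s show "if x = Num 0 then is_M_monom a m else (\<exists>a'. a = x # a' \<and> is_M_monom a' m)"
  proof (cases rule: sorted_wrt_less_nat_cases)
    case (1 l')
    then show ?thesis using m l by (auto simp: monom_of_map_Suc mcons_eq_iff is_M_monom_def)
  next
    case (2 l')
    then obtain b a' where a: "a = b # a'" using l by (cases a) auto
    have "b \<noteq> Num 0" using assms a by (simp add: is_comp_Cons)
    then show ?thesis using m l 2 a by (auto simp: monom_of_0_map_Suc mcons_eq_iff is_M_monom_def)
  qed
next
  assume h: "if x = Num 0 then is_M_monom a m else (\<exists>a'. a = x # a' \<and> is_M_monom a' m)"
  show "is_M_monom a (mcons x m)"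
  proof (cases "x = Num 0")
    case True
    then obtain ix where "length ix = length a" "sorted_wrt (<) ix" "m = monom_of ix a"
      using h by (auto simp: is_M_monom_def)
    then show ?thesis using True unfolding is_M_monom_def
      by (intro exI[of _ "map Suc ix"]) (auto simp: monom_of_map_Suc sorted_wrt_map)
  next
    case False
    then obtain a' ix where "a = x # a'" "length ix = length a'" "sorted_wrt (<) ix"
      "m = monom_of ix a'"
      using h by (auto simp: is_M_monom_def)
    then show ?thesis unfolding is_M_monom_def
      by (intro exI[of _ "0 # map Suc ix"]) (auto simp: monom_of_0_map_Suc sorted_wrt_map)
  qed
qed

lemma is_M_monom_one: "is_comp a \<Longrightarrow> is_M_monom a monom_one \<longleftrightarrow> a = []"
proof
  assume a: "is_comp a" and "is_M_monom a monom_one"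
  then obtain ix where "length ix = length a" "monom_one = monom_of ix a"
    by (auto simp: is_M_monom_def)
  show "a = []"
  proof (rule ccontr)
    assume "a \<noteq> []"
    then obtain x a' i ix' where "a = x # a'" "ix = i # ix'"
      using \<open>length ix = length a\<close> by (cases a; cases ix) auto
    then have "monom_one i = x"
      using fun_cong[OF \<open>monom_one = monom_of ix a\<close>, of i] by (simp add: monom_of_def)
    then show False using a \<open>a = x # a'\<close> by (simp add: monom_one_def is_comp_Cons)
  qed
qed (auto simp: is_M_monom_def monom_of_def monom_one_def)

lemma fin_monom_monom_of: "fin_monom (monom_of ix a)"
proof -
  have "{i. monom_of ix a i \<noteq> Num 0} \<subseteq> set ix"
    by (auto simp: monom_of_def split: option.splits dest: map_of_SomeD set_zip_leftD)
  then show ?thesis unfolding fin_monom_def by (rule finite_subset) simp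
qed

lemma Mfun_mcons:
  assumes "is_comp a"
  shows "Mfun a (mcons x m) =
    (if x = Num 0 then Mfun a m else case a of [] \<Rightarrow> 0 | b # a' \<Rightarrow> if b = x then Mfun a' m else 0)"
  using is_M_monom_mcons[OF assms] by (auto simp: Mfun_eq split: list.splits)

lemma Mfun_monom_one: "is_comp a \<Longrightarrow> Mfun a monom_one = (if a = [] then 1 else 0)"
  by (simp add: Mfun_eq is_M_monom_one)

lemma Mfun_not_fin_monom: "\<not> fin_monom m \<Longrightarrow> Mfun a m = 0"
  by (auto simp: Mfun_eq is_M_monom_def fin_monom_monom_of)

lemma lin_ext_Mfun_not_fin_monom: "\<not> fin_monom m \<Longrightarrow> lin_ext Mfun c m = 0"
  by (simp add: lin_ext_def Mfun_not_fin_monom)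

lemma lin_ext_Mfun_monom_one:
  assumes "valid_coeffs is_comp c"
  shows "lin_ext Mfun c monom_one = c []"
proof -
  have "lin_ext Mfun c monom_one = (\<Sum>a\<in>supp c. if a = [] then c a else 0)"
    unfolding lin_ext_def using assms
    by (intro sum.cong refl) (auto simp: valid_coeffs_iff Mfun_monom_one)
  also have "\<dots> = c []" using assms by (simp add: valid_coeffs_iff sum.delta') (simp add: supp_def)
  finally show ?thesis .
qed

lemma lin_ext_Mfun_mcons:
  fixes c :: "ntilde list \<Rightarrow> 'k::comm_ring_1"
  assumes c: "valid_coeffs is_comp c"
  shows "lin_ext Mfun c (mcons x m) = lin_ext Mfun (shift c x) m"
proof (cases "x = Num 0")
  case True
  then show ?thesis unfolding lin_ext_def using c
    by (intro sum.cong) (auto simp: shift_def valid_coeffs_iff Mfun_mcons)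
next
  case False
  define M where "M a = (case a of [] \<Rightarrow> 0 | b # a' \<Rightarrow> if b = x then Mfun a' m else (0 :: 'k))" for a
  have fin: "finite (supp c)" using c by (simp add: valid_coeffs_iff)
  have "lin_ext Mfun c (mcons x m) = (\<Sum>a\<in>supp c. c a * M a)"
    unfolding lin_ext_def M_def using c False
    by (intro sum.cong refl) (auto simp: valid_coeffs_iff Mfun_mcons)
  also have "\<dots> = (\<Sum>a\<in>Cons x ` supp (shift c x). c a * M a)"
    using False
    by (intro sum.mono_neutral_right[OF fin]) (auto simp: shift_def supp_def M_def split: list.splits)
  also have "\<dots> = (\<Sum>a\<in>supp (shift c x). c (x # a) * Mfun a m)"
    by (subst sum.reindex) (auto simp: inj_on_def M_def)
  also have "\<dots> = lin_ext Mfun (shift c x) m" using False by (simp add: lin_ext_def shift_def)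
  finally show ?thesis .
qed

definition monom_splits :: "monom \<Rightarrow> (monom \<times> monom) set" where
  "monom_splits m = {(a, b). fin_monom a \<and> fin_monom b \<and> (\<forall>i. nt_add (a i) (b i) = m i)}"

lemma ser_mult_eq: "ser_mult f g m = (\<Sum>(a, b)\<in>monom_splits m. f a * g b)"
  by (simp add: ser_mult_def monom_splits_def)

lemma monom_splits_mcons:
  "monom_splits (mcons x m) = (\<lambda>(pq, ab). (mcons (fst pq) (fst ab), mcons (snd pq) (snd ab))) `
     (nt_splits x \<times> monom_splits m)" (is "_ = ?f ` _")
proof (rule set_eqI)
  fix ab :: "monom \<times> monom"
  obtain a b where ab: "ab = (a, b)" by (cases ab)
  show "ab \<in> monom_splits (mcons x m) \<longleftrightarrow> ab \<in> ?f ` (nt_splits x \<times> monom_splits m)"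
  proof
    assume h: "ab \<in> monom_splits (mcons x m)"
    have "(a 0, b 0) \<in> nt_splits x"
      using h ab by (auto simp: monom_splits_def nt_splits_def dest: spec[of _ 0])
    moreover have "(\<lambda>j. a (Suc j), \<lambda>j. b (Suc j)) \<in> monom_splits m"
      using h ab fin_monom_mcons[of "a 0" "\<lambda>j. a (Suc j)"] fin_monom_mcons[of "b 0" "\<lambda>j. b (Suc j)"]
        mcons_decomp[of a] mcons_decomp[of b]
      by (auto simp: monom_splits_def dest: spec[of _ "Suc _"])
    ultimately show "ab \<in> ?f ` (nt_splits x \<times> monom_splits m)"
      using ab mcons_decomp[of a] mcons_decomp[of b]
      by (intro image_eqI[where x="((a 0, b 0), (\<lambda>j. a (Suc j), \<lambda>j. b (Suc j)))"]) auto
  next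
    assume "ab \<in> ?f ` (nt_splits x \<times> monom_splits m)"
    then obtain p q a' b' where e: "ab = (mcons p a', mcons q b')" and pq: "nt_add p q = x"
      and s: "(a', b') \<in> monom_splits m"
      by (auto simp: nt_splits_def)
    have "nt_add (mcons p a' i) (mcons q b' i) = mcons x m i" for i
      using pq s by (cases i) (auto simp: monom_splits_def)
    then show "ab \<in> monom_splits (mcons x m)"
      using e s by (auto simp: monom_splits_def fin_monom_mcons)
  qed
qed

lemma ser_mult_mcons:
  "ser_mult f g (mcons x m) =
    (\<Sum>pq\<in>nt_splits x. ser_mult (\<lambda>m'. f (mcons (fst pq) m')) (\<lambda>m'. g (mcons (snd pq) m')) m)"
proof -
  have inj: "inj_on (\<lambda>(pq, ab). (mcons (fst pq) (fst ab), mcons (snd pq) (snd ab)))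
      (nt_splits x \<times> monom_splits m)"
    by (auto simp: inj_on_def mcons_eq_iff)
  show ?thesis
    unfolding ser_mult_eq monom_splits_mcons sum.reindex[OF inj] sum.cartesian_product
    by (rule sum.cong) (auto simp: case_prod_beta)
qed

lemma monom_splits_one: "monom_splits monom_one = {(monom_one, monom_one)}"
proof -
  have "fin_monom monom_one" by (simp add: fin_monom_def monom_one_def)
  moreover have "(\<forall>i. nt_add (a i) (b i) = monom_one i) \<longleftrightarrow> a = monom_one \<and> b = monom_one" for a b
    by (auto simp: monom_one_def nt_add_eq_Num0_iff fun_eq_iff)
  ultimately show ?thesis by (auto simp: monom_splits_def)
qed

lemma monom_splits_not_fin_monom: "\<not> fin_monom m \<Longrightarrow> monom_splits m = {}"
proof (rule ccontr)
  assume nf: "\<not> fin_monom m" and "monom_splits m \<noteq> {}"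
  then obtain a b where ab: "fin_monom a" "fin_monom b" "\<forall>i. nt_add (a i) (b i) = m i"
    by (auto simp: monom_splits_def)
  then have "{i. m i \<noteq> Num 0} \<subseteq> {i. a i \<noteq> Num 0} \<union> {i. b i \<noteq> Num 0}"
    by (auto simp: nt_add_eq_Num0_iff) (metis nt_add_Num0_left)
  then have "fin_monom m" using ab unfolding fin_monom_def by (auto intro: finite_subset)
  then show False using nf by simp
qed

text \<open>Induction on a bound for the support of the monomial: \<open>ser_mult_mcons\<close> and
  \<open>shift_coeff_mult\<close> peel off the first variable on both sides in the same way.\<close>
lemma ser_mult_lin_ext_Mfun_bounded:
  assumes "\<forall>i\<ge>n. m i = Num 0" "valid_coeffs is_comp A" "valid_coeffs is_comp B"
  shows "ser_mult (lin_ext Mfun A) (lin_ext Mfun B) m = lin_ext Mfun (coeff_mult A B) m"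
  using assms
proof (induction n arbitrary: m A B)
  case 0
  then have "m = monom_one" by (auto simp: monom_one_def)
  then show ?case using 0(2,3) valid_coeff_mult[OF 0(2,3)]
    by (simp add: ser_mult_eq monom_splits_one lin_ext_Mfun_monom_one)
      (simp add: coeff_mult_def is_comp_Nil)
next
  case (Suc n)
  define x where "x = m 0"
  define m' where "m' = (\<lambda>j. m (Suc j))"
  have m: "m = mcons x m'" unfolding x_def m'_def by (rule mcons_decomp)
  have m': "\<forall>i\<ge>n. m' i = Num 0" using Suc.prems(1) by (simp add: m'_def)
  have AB: "valid_coeffs is_comp (coeff_mult A B)" using Suc.prems by (simp add: valid_coeff_mult)
  have shifted: "(\<lambda>m''. lin_ext Mfun C (mcons p m'')) = lin_ext Mfun (shift C p)"
    if "valid_coeffs is_comp C" for C :: "_ \<Rightarrow> 'a" and p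
    using that by (intro ext) (simp add: lin_ext_Mfun_mcons)
  have "ser_mult (lin_ext Mfun A) (lin_ext Mfun B) m = (\<Sum>pq\<in>nt_splits x.
      ser_mult (lin_ext Mfun (shift A (fst pq))) (lin_ext Mfun (shift B (snd pq))) m')"
    unfolding m ser_mult_mcons using Suc.prems by (simp add: shifted)
  also have "\<dots> = (\<Sum>pq\<in>nt_splits x. lin_ext Mfun (coeff_mult (shift A (fst pq)) (shift B (snd pq))) m')"
    using Suc.IH m' Suc.prems by (intro sum.cong refl) (simp add: valid_shift)
  also have "\<dots> = lin_ext Mfun (coeff_mult A B) m"
  proof (cases "x = Num 0")
    case True
    then show ?thesis unfolding m using AB by (simp add: nt_splits_Num0 lin_ext_Mfun_mcons shift_def)
  next
    case False
    have "lin_ext Mfun (coeff_mult A B) m = lin_ext Mfun (shift (coeff_mult A B) x) m'"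
      unfolding m using AB by (rule lin_ext_Mfun_mcons)
    also have "\<dots> = (\<Sum>pq\<in>nt_splits x. 1 * lin_ext Mfun (coeff_mult (shift A (fst pq)) (shift B (snd pq))) m')"
      unfolding shift_coeff_mult[OF False]
      using valid_coeff_mult[OF valid_shift[OF Suc.prems(2)] valid_shift[OF Suc.prems(3)]]
      by (intro lin_ext_sum finite_nt_splits) (simp add: valid_coeffs_iff)
    finally show ?thesis by simp
  qed
  finally show ?case .
qed

lemma ser_mult_lin_ext_Mfun:
  assumes "valid_coeffs is_comp A" "valid_coeffs is_comp B"
  shows "ser_mult (lin_ext Mfun A) (lin_ext Mfun B) = lin_ext Mfun (coeff_mult A B)"
proof (rule ext)
  fix m
  show "ser_mult (lin_ext Mfun A) (lin_ext Mfun B) m = lin_ext Mfun (coeff_mult A B) m"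
  proof (cases "fin_monom m")
    case True
    then obtain n where "\<forall>i\<in>{i. m i \<noteq> Num 0}. i < n"
      unfolding fin_monom_def using finite_nat_set_iff_bounded by blast
    then have "\<forall>i\<ge>n. m i = Num 0" using leD by blast
    then show ?thesis using assms by (rule ser_mult_lin_ext_Mfun_bounded)
  next
    case False
    then show ?thesis by (simp add: ser_mult_eq monom_splits_not_fin_monom lin_ext_Mfun_not_fin_monom)
  qed
qed

text \<open>A coefficient is recovered by evaluating at the monomial whose exponents, read from
  \<open>x\<^sub>0\<close> on, are the entries of the composition.\<close>
lemma lin_ext_Mfun_foldr_mcons:
  "valid_coeffs is_comp c \<Longrightarrow> is_comp g \<Longrightarrow> lin_ext Mfun c (foldr mcons g monom_one) = c g"
proof (induction g arbitrary: c)
  case Nil then show ?case by (simp add: lin_ext_Mfun_monom_one)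
next
  case (Cons x g)
  then have x: "x \<noteq> Num 0" and g: "is_comp g" by (auto simp: is_comp_Cons)
  have "lin_ext Mfun c (foldr mcons (x # g) monom_one) = lin_ext Mfun (shift c x) (foldr mcons g monom_one)"
    using Cons.prems by (simp add: lin_ext_Mfun_mcons)
  also have "\<dots> = shift c x g" using Cons.IH[OF valid_shift[OF Cons.prems(1)] g] .
  finally show ?case using x by (simp add: shift_def)
qed

lemma lin_ext_Mfun_inj:
  assumes "valid_coeffs is_comp c" "valid_coeffs is_comp d" "lin_ext Mfun c = lin_ext Mfun d"
  shows "c = d"
proof (rule ext)
  fix g
  show "c g = d g"
  proof (cases "is_comp g")
    case True
    then show ?thesis
      using lin_ext_Mfun_foldr_mcons[OF assms(1) True] lin_ext_Mfun_foldr_mcons[OF assms(2) True] assms(3)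
      by simp
  next
    case False
    then have "c g = 0" "d g = 0" using assms(1,2) unfolding valid_coeffs_def by blast+
    then show ?thesis by simp
  qed
qed

lemma phiM_eq: "phiM = (\<lambda>a m. phi_sign a * Mfun (bar a) m)"
  by (intro ext) (simp add: phiM_def phi_sign_def eps_sign_def ser_smult_def)

lemma phi_lin_ext_Mfun:
  assumes c: "valid_coeffs is_comp c"
  shows "phi (lin_ext Mfun c) = lin_ext Mfun (phi_coeffs c)"
proof -
  let ?c = "SOME c'. valid_coeffs is_comp c' \<and> lin_ext Mfun c = lin_ext Mfun c'"
  have "\<exists>c'. valid_coeffs is_comp c' \<and> lin_ext Mfun c = lin_ext Mfun c'"
    using c by blast
  then have "valid_coeffs is_comp ?c \<and> lin_ext Mfun c = lin_ext Mfun ?c"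
    by (rule someI_ex)
  then have "?c = c" using lin_ext_Mfun_inj[OF _ c] by simp
  then have "phi (lin_ext Mfun c) = lin_ext phiM c" by (simp add: phi_def lincomb_eq_lin_ext)
  also have "\<dots> = lin_ext Mfun (phi_coeffs c)"
    using c by (simp add: phiM_eq phi_coeffs_def lin_ext_weighted_delta valid_coeffs_iff)
  finally show ?thesis .
qed

lemma valid_coeffs_add: "valid_coeffs P c \<Longrightarrow> valid_coeffs P d \<Longrightarrow> valid_coeffs P (\<lambda>w. c w + d w)"
  using supp_add_subset[of c d] by (auto simp: valid_coeffs_iff intro: finite_subset)

lemma valid_coeffs_smult:
  fixes c :: "ntilde list \<Rightarrow> 'k::comm_ring_1"
  assumes "valid_coeffs P c"
  shows "valid_coeffs P (\<lambda>w. k * c w)"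
proof -
  have "supp (\<lambda>w. k * c w) \<subseteq> supp c" by (auto simp: supp_def)
  then show ?thesis using assms by (auto simp: valid_coeffs_iff intro: finite_subset)
qed

lemma ser_add_lin_ext:
  "finite (supp c) \<Longrightarrow> finite (supp d) \<Longrightarrow> ser_add (lin_ext K c) (lin_ext K d) = lin_ext K (\<lambda>w. c w + d w)"
  by (simp add: ser_add_def lin_ext_add fun_eq_iff)

lemma ser_smult_lin_ext: "finite (supp c) \<Longrightarrow> ser_smult k (lin_ext K c) = lin_ext K (\<lambda>w. k * c w)"
  by (simp add: ser_smult_def lin_ext_smult fun_eq_iff)

lemma phi_coeffs_add:
  "finite (supp c) \<Longrightarrow> finite (supp d) \<Longrightarrow> phi_coeffs (\<lambda>w. c w + d w) = (\<lambda>w. phi_coeffs c w + phi_coeffs d w)"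
  by (simp add: phi_coeffs_def lin_ext_add fun_eq_iff)

lemma phi_coeffs_smult: "finite (supp c) \<Longrightarrow> phi_coeffs (\<lambda>w. k * c w) = (\<lambda>w. k * phi_coeffs c w)"
  by (simp add: phi_coeffs_def lin_ext_smult fun_eq_iff)

lemma valid_coeffs_comp_phi_coeffs: "valid_coeffs is_comp c \<Longrightarrow> valid_coeffs is_comp (phi_coeffs c)"
  using valid_phi_coeffs by (fastforce simp: valid_coeffs_iff is_qcomp_def)

lemma phi_ser_add:
  assumes "valid_coeffs is_comp c" "valid_coeffs is_comp d"
  shows "phi (ser_add (lin_ext Mfun c) (lin_ext Mfun d)) = ser_add (phi (lin_ext Mfun c)) (phi (lin_ext Mfun d))"
  using assms valid_coeffs_comp_phi_coeffs[OF assms(1)] valid_coeffs_comp_phi_coeffs[OF assms(2)]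
  by (simp add: valid_coeffs_iff[of _ c] valid_coeffs_iff[of _ d] valid_coeffs_iff[of _ "phi_coeffs _"]
      ser_add_lin_ext phi_lin_ext_Mfun valid_coeffs_add phi_coeffs_add)

lemma phi_ser_smult:
  assumes "valid_coeffs is_comp c"
  shows "phi (ser_smult k (lin_ext Mfun c)) = ser_smult k (phi (lin_ext Mfun c))"
  using assms valid_coeffs_comp_phi_coeffs[OF assms]
  by (simp add: valid_coeffs_iff[of _ c] valid_coeffs_iff[of _ "phi_coeffs _"]
      ser_smult_lin_ext phi_lin_ext_Mfun valid_coeffs_smult phi_coeffs_smult)

lemma phi_ser_mult:
  assumes "valid_coeffs is_comp c" "valid_coeffs is_comp d"
  shows "phi (ser_mult (lin_ext Mfun c) (lin_ext Mfun d)) = ser_mult (phi (lin_ext Mfun c)) (phi (lin_ext Mfun d))"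
  using assms by (simp add: ser_mult_lin_ext_Mfun phi_lin_ext_Mfun valid_coeff_mult
      valid_coeffs_comp_phi_coeffs phi_coeff_mult)

lemma ser_one_eq: "ser_one = lin_ext Mfun (delta [])"
  by (rule ext) (simp add: ser_one_def Mfun_def monom_of_def)

lemma phi_ser_one: "phi ser_one = ser_one"
proof -
  have unit: "valid_coeffs is_comp (delta [] :: _ \<Rightarrow> 'k::comm_ring_1)"
    by (simp add: valid_coeffs_iff is_comp_Nil)
  show ?thesis unfolding ser_one_eq phi_lin_ext_Mfun[OF unit] phi_coeffs_delta by simp
qed

theorem lemma3p6:
  fixes dummy :: "'k::comm_ring_1"
  assumes Q_in_k: "\<And>n::nat. n > 0 \<Longrightarrow> \<exists>y::'k. of_nat n * y = 1"
  shows "phi ` (WCQSym :: 'k series set) \<subseteq> QSym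
    \<and> (\<forall>f \<in> (WCQSym :: 'k series set). \<forall>g \<in> WCQSym. phi (ser_add f g) = ser_add (phi f) (phi g))
    \<and> (\<forall>c::'k. \<forall>f \<in> (WCQSym :: 'k series set). phi (ser_smult c f) = ser_smult c (phi f))
    \<and> (\<forall>f \<in> (WCQSym :: 'k series set). \<forall>g \<in> WCQSym. phi (ser_mult f g) = ser_mult (phi f) (phi g))
    \<and> phi (ser_one :: 'k series) = ser_one"
proof -
  have W: "WCQSym = lin_ext Mfun ` {c. valid_coeffs is_comp c}"
    and Q: "QSym = lin_ext Mfun ` {c. valid_coeffs is_qcomp c}"
    by (auto simp: WCQSym_def QSym_def lincomb_eq_lin_ext)
  have "phi ` WCQSym \<subseteq> (QSym :: 'k series set)"
    unfolding W Q by (auto simp: phi_lin_ext_Mfun valid_phi_coeffs)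
  then show ?thesis
    unfolding W by (simp add: phi_ser_add phi_ser_smult phi_ser_mult phi_ser_one)
qed

end
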